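(* Let $C$ be a bounded closed convex subset of a Hilbert space $H$ and let $T : C \rightarrow C$ be a $(b,k)$-enriched strictly pseudocontractive mapping for some $0 \leq k < 1$. Then $\mathrm{Fix}(T) \neq \emptyset$ and, for any given $x_0 \in C$ and any control sequence $\{\alpha_n\}$ of real numbers such that $k < \alpha_n < 1$ for all $n$ and $$\sum_{n=0}^{\infty} (\alpha_n - k)(1 - \alpha_n) = \infty,$$ the Krasnoselskij-Mann iteration $\{x_n\}_{n=0}^\infty$ given by $$x_{n+1} = (1 - \lambda\alpha_n)x_n + \lambda\alpha_n T x_n, \quad n \geq 0,$$ for some $\lambda \in (0,1)$, converges weakly to a fixed point of $T$.
   Context: For a mapping $T : C \to C$, $C \subseteq H$, $\mathrm{Fix}(T) = \{x \in C : Tx = x\}$. A mapping $T : C \to C$ is called $(b,k)$-enriched strictly pseudocontractive if there exist $b \in [0,\infty)$ and $k < 1$ such that for all $x, y \in C$, $$\|b(x - y) + Tx - Ty\|^2 \leq (b + 1)^2\|x - y\|^2 + k\|x - y - (Tx - Ty)\|^2.$$ *)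

theory Defs
  imports "HOL-Analysis.Analysis"
begin

definition Fix :: "'a set \<Rightarrow> ('a \<Rightarrow> 'a) \<Rightarrow> 'a set" where
  "Fix C T = {x \<in> C. T x = x}"

definition enriched_strictly_pseudocontractive ::
  "real \<Rightarrow> real \<Rightarrow> 'a::real_inner set \<Rightarrow> ('a \<Rightarrow> 'a) \<Rightarrow> bool" where
  "enriched_strictly_pseudocontractive b k C T \<longleftrightarrow>
     b \<ge> 0 \<and> k < 1 \<and>
     (\<forall>x\<in>C. \<forall>y\<in>C.
        (norm (b *\<^sub>R (x - y) + T x - T y))\<^sup>2
          \<le> (b + 1)\<^sup>2 * (norm (x - y))\<^sup>2 + k * (norm (x - y - (T x - T y)))\<^sup>2)"

definition weakly_converges_to :: "(nat \<Rightarrow> 'a::real_inner) \<Rightarrow> 'a \<Rightarrow> bool" where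
  "weakly_converges_to x p \<longleftrightarrow> (\<forall>y. (\<lambda>n. inner (x n) y) \<longlonglongrightarrow> inner p y)"

end

theory Submission
  imports Defs
begin

text \<open>
  With \<open>\<mu> = (1 - k) / (b + 1)\<close>, the enriched inequality says exactly that the averaged map
  \<open>U = (1 - \<mu>) I + \<mu> T\<close> is nonexpansive on \<open>C\<close>, and \<open>U\<close> has the same fixed points as \<open>T\<close>.
  For \<open>\<lambda> = \<mu> / 2\<close> the scheme is the Krasnoselskij-Mann iteration of \<open>U\<close> with steps
  \<open>s\<^sub>n = \<alpha>\<^sub>n / 2\<close>, and \<open>\<Sum> s\<^sub>n (1 - s\<^sub>n) = \<infinity>\<close>.

  Weak compactness is replaced by asymptotic centres. The function
  \<open>w \<mapsto> limsup \<parallel>x\<^sub>n - w\<parallel>\<^sup>2\<close> is strongly convex, so a bounded sequence in \<open>C\<close> has a unique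
  minimiser over \<open>C\<close>, and if \<open>\<parallel>x\<^sub>n - U x\<^sub>n\<parallel> \<rightarrow> 0\<close> this centre is a fixed point of \<open>U\<close>.
  Applied to fixed points of the contractions \<open>(1 - a) U + a c\<^sub>0\<close>, \<open>a \<rightarrow> 0\<close>, this gives
  \<open>Fix U \<noteq> {}\<close> (Browder-Goehde-Kirk). The Krasnoselskij-Mann sequence is Fejer monotone
  with respect to \<open>Fix U\<close> and asymptotically regular; hence every subsequence has the same
  centre \<open>z\<close>, which also minimises the asymptotic radius over the whole space. Minimality of
  \<open>t \<mapsto> limsup \<parallel>x\<^sub>n - (z + t y)\<parallel>\<^sup>2\<close> at \<open>t = 0\<close> forces every subsequential limit of
  \<open>\<langle>x\<^sub>n, y\<rangle>\<close> to be \<open>\<langle>z, y\<rangle>\<close>.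
\<close>

section \<open>Limit superior of bounded real sequences\<close>

(* Real-valued rather than the extended-real library limsup; meaningful only for bounded sequences. *)
definition limsup_real :: "(nat \<Rightarrow> real) \<Rightarrow> real" where
  "limsup_real f = Inf {c. eventually (\<lambda>n. f n \<le> c) sequentially}"

lemma limsup_real_bounds:
  fixes f :: "nat \<Rightarrow> real"
  assumes "Bseq f"
  shows "{c. eventually (\<lambda>n. f n \<le> c) sequentially} \<noteq> {}"
    and "bdd_below {c. eventually (\<lambda>n. f n \<le> c) sequentially}"
proof -
  obtain K where K: "\<And>n. \<bar>f n\<bar> \<le> K"
    using assms unfolding Bseq_def by auto
  then have "K \<in> {c. eventually (\<lambda>n. f n \<le> c) sequentially}"
    by (auto intro: always_eventually abs_le_D1)
  then show "{c. eventually (\<lambda>n. f n \<le> c) sequentially} \<noteq> {}" by blast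
  have "- K \<le> c" if "eventually (\<lambda>n. f n \<le> c) sequentially" for c
  proof -
    from that obtain N where "f N \<le> c" by (auto simp: eventually_sequentially)
    with K[of N] show ?thesis by linarith
  qed
  then show "bdd_below {c. eventually (\<lambda>n. f n \<le> c) sequentially}"
    by (intro bdd_belowI[where m="- K"]) auto
qed

lemma limsup_real_le:
  assumes "Bseq f" "eventually (\<lambda>n. f n \<le> c) sequentially"
  shows "limsup_real f \<le> c"
  unfolding limsup_real_def using assms limsup_real_bounds[OF assms(1)] by (intro cInf_lower) auto

lemma eventually_le_limsup_real:
  assumes "Bseq f" "0 < e"
  shows "eventually (\<lambda>n. f n \<le> limsup_real f + e) sequentially"
proof -
  have "Inf {c. eventually (\<lambda>n. f n \<le> c) sequentially} < limsup_real f + e"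
    using assms(2) unfolding limsup_real_def by simp
  then obtain c where "eventually (\<lambda>n. f n \<le> c) sequentially" "c < limsup_real f + e"
    using cInf_less_iff[OF limsup_real_bounds[OF assms(1)]] by blast
  then show ?thesis by (auto elim: eventually_mono)
qed

lemma limsup_real_ge:
  assumes "Bseq f" "\<And>n. a \<le> f n"
  shows "a \<le> limsup_real f"
  unfolding limsup_real_def
proof (rule cInf_greatest[OF limsup_real_bounds(1)[OF assms(1)]])
  fix c assume "c \<in> {c. eventually (\<lambda>n. f n \<le> c) sequentially}"
  then obtain N where "f N \<le> c" by (auto simp: eventually_sequentially)
  then show "a \<le> c" using assms(2)[of N] by linarith
qed

lemma limsup_real_tendsto:
  assumes "f \<longlonglongrightarrow> L"
  shows "limsup_real f = L"
proof (rule antisym)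
  have bdd: "Bseq f" using assms by (auto intro: convergent_imp_Bseq convergentI)
  show "limsup_real f \<le> L"
  proof (rule field_le_epsilon)
    fix e :: real assume "0 < e"
    then have "eventually (\<lambda>n. f n < L + e) sequentially"
      using order_tendstoD(2)[OF assms] by simp
    then show "limsup_real f \<le> L + e"
      by (intro limsup_real_le[OF bdd]) (auto elim: eventually_mono)
  qed
  show "L \<le> limsup_real f"
    unfolding limsup_real_def
    using assms limsup_real_bounds(1)[OF bdd] by (auto intro!: cInf_greatest tendsto_upperbound)
qed

lemma limsup_real_le_combination:
  assumes "Bseq f" "Bseq g" "Bseq h" "0 \<le> a" "0 \<le> b"
    and "\<And>n. f n \<le> a * g n + b * h n + c"
  shows "limsup_real f \<le> a * limsup_real g + b * limsup_real h + c"
proof (rule field_le_epsilon)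
  fix e :: real assume "0 < e"
  define d where "d = e / (a + b + 1)"
  have "0 < d" using \<open>0 < e\<close> assms(4,5) unfolding d_def by simp
  have "(a + b) * d \<le> e"
    using \<open>0 < e\<close> assms(4,5) unfolding d_def by (simp add: field_simps)
  have "eventually (\<lambda>n. g n \<le> limsup_real g + d \<and> h n \<le> limsup_real h + d) sequentially"
    using eventually_le_limsup_real[OF assms(2) \<open>0 < d\<close>]
      eventually_le_limsup_real[OF assms(3) \<open>0 < d\<close>] by (rule eventually_conj)
  then have "eventually (\<lambda>n. f n \<le> a * limsup_real g + b * limsup_real h + c + e) sequentially"
  proof (rule eventually_mono)
    fix n assume "g n \<le> limsup_real g + d \<and> h n \<le> limsup_real h + d"
    then have "a * g n + b * h n \<le> a * (limsup_real g + d) + b * (limsup_real h + d)"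
      using assms(4,5) by (intro add_mono mult_left_mono) auto
    then show "f n \<le> a * limsup_real g + b * limsup_real h + c + e"
      using assms(6)[of n] \<open>(a + b) * d \<le> e\<close> by (simp add: algebra_simps)
  qed
  then show "limsup_real f \<le> a * limsup_real g + b * limsup_real h + c + e"
    by (rule limsup_real_le[OF assms(1)])
qed

section \<open>Strongly convex functions on Hilbert spaces\<close>

lemma norm_diff_midpoint_sq:
  fixes a u v :: "'a::real_inner"
  shows "(norm (a - (1/2) *\<^sub>R (u + v)))\<^sup>2 =
    (norm (a - u))\<^sup>2 / 2 + (norm (a - v))\<^sup>2 / 2 - (norm (u - v))\<^sup>2 / 4"
  unfolding power2_norm_eq_inner
  by (simp add: inner_diff_left inner_diff_right inner_add_left inner_add_right
      inner_commute field_simps)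

lemma norm_convex_combination_sq:
  fixes a b :: "'a::real_inner"
  shows "(norm ((1 - s) *\<^sub>R a + s *\<^sub>R b))\<^sup>2 =
    (1 - s) * (norm a)\<^sup>2 + s * (norm b)\<^sup>2 - s * (1 - s) * (norm (a - b))\<^sup>2"
  by (simp add: power2_norm_eq_inner inner_diff_left inner_diff_right inner_add_left
      inner_add_right inner_commute algebra_simps)

lemma norm_diff_translate_sq:
  fixes a z y :: "'a::real_inner"
  shows "(norm (a - (z + t *\<^sub>R y)))\<^sup>2 =
    (norm (a - z))\<^sup>2 - 2 * t * (inner a y - inner z y) + t\<^sup>2 * (norm y)\<^sup>2"
  unfolding power2_norm_eq_inner
  by (simp add: inner_diff_left inner_diff_right inner_add_left
      inner_add_right inner_commute algebra_simps power2_eq_square)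

lemma norm_diff_sq_le:
  fixes a u v :: "'a::real_normed_vector"
  shows "(norm (a - u))\<^sup>2 \<le> (norm (a - v))\<^sup>2 + norm (u - v) * (2 * norm a + norm u + norm v)"
proof -
  have "norm (a - u) - norm (a - v) \<le> norm (u - v)"
    using norm_triangle_ineq[of "a - v" "v - u"] by (simp add: norm_minus_commute)
  moreover have "norm (a - u) + norm (a - v) \<le> 2 * norm a + norm u + norm v"
    using norm_triangle_ineq4[of a u] norm_triangle_ineq4[of a v] by linarith
  ultimately have "(norm (a - u) - norm (a - v)) * (norm (a - u) + norm (a - v))
      \<le> norm (u - v) * (2 * norm a + norm u + norm v)"
    by (intro mult_mono) auto
  then show ?thesis by (simp add: power2_eq_square algebra_simps)
qed

lemma nonpos_if_le_quadratic:
  fixes a q :: real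
  assumes "\<And>t. 0 < t \<Longrightarrow> t \<le> 1 \<Longrightarrow> t * a \<le> t\<^sup>2 * q"
  shows "a \<le> 0"
proof (rule ccontr)
  assume "\<not> a \<le> 0"
  define t where "t = min 1 (a / (\<bar>q\<bar> + 1))"
  have t: "0 < t" "t \<le> 1" "t \<le> a / (\<bar>q\<bar> + 1)"
    using \<open>\<not> a \<le> 0\<close> by (auto simp: t_def)
  have "a \<le> t * q" using assms[OF t(1,2)] t(1) by (simp add: power2_eq_square)
  also have "\<dots> < t * (\<bar>q\<bar> + 1)" using t(1) by (intro mult_strict_left_mono) auto
  finally show False using t(3) by (simp add: pos_le_divide_eq)
qed

lemma strongly_convex_minimizing_seq_Cauchy:
  fixes \<phi> :: "'a::real_inner \<Rightarrow> real"
  assumes "convex C" and m: "\<And>c. c \<in> C \<Longrightarrow> m \<le> \<phi> c"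
    and midpoint: "\<And>u v. u \<in> C \<Longrightarrow> v \<in> C \<Longrightarrow>
        \<phi> ((1/2) *\<^sub>R (u + v)) \<le> \<phi> u / 2 + \<phi> v / 2 - (norm (u - v))\<^sup>2 / 4"
    and c: "\<And>n. c n \<in> C" and lim: "(\<lambda>n. \<phi> (c n)) \<longlonglongrightarrow> m"
  shows "Cauchy c"
proof (rule CauchyI)
  have dist_sq: "(norm (c i - c j))\<^sup>2 \<le> 2 * \<phi> (c i) + 2 * \<phi> (c j) - 4 * m" for i j
  proof -
    have "(1/2) *\<^sub>R (c i + c j) = (1/2) *\<^sub>R c i + (1 - 1/2) *\<^sub>R c j"
      by (simp add: scaleR_right_distrib)
    then have "(1/2) *\<^sub>R (c i + c j) \<in> C"
      using convexD[OF assms(1) c[of i] c[of j]] by simp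
    then have "m \<le> \<phi> ((1/2) *\<^sub>R (c i + c j))" by (rule m)
    then show ?thesis using midpoint[OF c c, of i j] by linarith
  qed
  fix e :: real assume "0 < e"
  then obtain M where M: "\<And>n. n \<ge> M \<Longrightarrow> \<phi> (c n) < m + e\<^sup>2 / 8"
    using order_tendstoD(2)[OF lim, of "m + e\<^sup>2 / 8"] by (auto simp: eventually_sequentially)
  have "norm (c i - c j) < e" if "i \<ge> M" "j \<ge> M" for i j
  proof (rule power2_less_imp_less)
    show "(norm (c i - c j))\<^sup>2 < e\<^sup>2"
      using dist_sq[of i j] M[OF that(1)] M[OF that(2)] zero_less_power[OF \<open>0 < e\<close>, of 2]
      by linarith
  qed (use \<open>0 < e\<close> in simp)
  then show "\<exists>M. \<forall>i\<ge>M. \<forall>j\<ge>M. norm (c i - c j) < e" by blast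
qed

lemma strongly_convex_attains_min:
  fixes \<phi> :: "'a::{real_inner,complete_space} \<Rightarrow> real"
  assumes C: "closed C" "convex C" "C \<noteq> {}"
    and nonneg: "\<And>c. c \<in> C \<Longrightarrow> 0 \<le> \<phi> c"
    and midpoint: "\<And>u v. u \<in> C \<Longrightarrow> v \<in> C \<Longrightarrow>
        \<phi> ((1/2) *\<^sub>R (u + v)) \<le> \<phi> u / 2 + \<phi> v / 2 - (norm (u - v))\<^sup>2 / 4"
    and lipschitz: "\<And>u v. u \<in> C \<Longrightarrow> v \<in> C \<Longrightarrow> \<phi> u \<le> \<phi> v + K * norm (u - v)"
  shows "\<exists>z\<in>C. \<forall>c\<in>C. \<phi> z \<le> \<phi> c"
proof -
  define m where "m = Inf (\<phi> ` C)"
  have bdd: "bdd_below (\<phi> ` C)"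
    using nonneg by (intro bdd_belowI[where m=0]) auto
  have m_le: "m \<le> \<phi> c" if "c \<in> C" for c
    unfolding m_def using bdd that by (auto intro: cInf_lower)
  have "\<exists>c\<in>C. \<phi> c < m + inverse (Suc n)" for n
    using cInf_less_iff[OF _ bdd, of "m + inverse (Suc n)"] C(3) unfolding m_def by auto
  then obtain c where c: "\<And>n. c n \<in> C" "\<And>n. \<phi> (c n) < m + inverse (Suc n)"
    by metis
  have lim: "(\<lambda>n. \<phi> (c n)) \<longlonglongrightarrow> m"
  proof (rule tendsto_sandwich[where f="\<lambda>n. m" and h="\<lambda>n. m + inverse (Suc n)"])
    show "eventually (\<lambda>n. m \<le> \<phi> (c n)) sequentially" using m_le c(1) by simp
    show "eventually (\<lambda>n. \<phi> (c n) \<le> m + inverse (Suc n)) sequentially"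
      using c(2) by (simp add: less_imp_le)
    show "(\<lambda>n. m + inverse (Suc n)) \<longlonglongrightarrow> m"
      using tendsto_add[OF tendsto_const LIMSEQ_inverse_real_of_nat, of m] by simp
  qed simp
  obtain z where z: "c \<longlonglongrightarrow> z"
    using strongly_convex_minimizing_seq_Cauchy[OF C(2) m_le midpoint c(1) lim]
    unfolding Cauchy_convergent_iff convergent_def by blast
  have "z \<in> C" using closed_sequentially[OF C(1) c(1) z] .
  have "(\<lambda>n. \<phi> (c n) + K * norm (z - c n)) \<longlonglongrightarrow> m + K * norm (z - z)"
    by (intro tendsto_add lim tendsto_mult tendsto_const tendsto_norm tendsto_diff z)
  moreover have "\<phi> z \<le> \<phi> (c n) + K * norm (z - c n)" for n
    by (rule lipschitz[OF \<open>z \<in> C\<close> c(1)])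
  ultimately have "\<phi> z \<le> m"
    by (intro LIMSEQ_le_const[where X="\<lambda>n. \<phi> (c n) + K * norm (z - c n)"]) simp_all
  with \<open>z \<in> C\<close> m_le show ?thesis by (meson order_trans)
qed

lemma strongly_convex_min_unique:
  fixes \<phi> :: "'a::real_inner \<Rightarrow> real"
  assumes "convex C" "z1 \<in> C" "z2 \<in> C"
    and "\<And>c. c \<in> C \<Longrightarrow> \<phi> z1 \<le> \<phi> c" "\<And>c. c \<in> C \<Longrightarrow> \<phi> z2 \<le> \<phi> c"
    and "\<phi> ((1/2) *\<^sub>R (z1 + z2)) \<le> \<phi> z1 / 2 + \<phi> z2 / 2 - (norm (z1 - z2))\<^sup>2 / 4"
  shows "z1 = z2"
proof -
  have "(1/2) *\<^sub>R (z1 + z2) = (1/2) *\<^sub>R z1 + (1 - 1/2) *\<^sub>R z2"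
    by (simp add: scaleR_right_distrib)
  then have "(1/2) *\<^sub>R (z1 + z2) \<in> C"
    using convexD[OF assms(1-3)] by simp
  then have "(norm (z1 - z2))\<^sup>2 \<le> 0"
    using assms(4)[of "(1/2) *\<^sub>R (z1 + z2)"] assms(5)[of "(1/2) *\<^sub>R (z1 + z2)"] assms(6)
    by linarith
  then show ?thesis by simp
qed

lemma nearest_point_in_convex_nearer:
  fixes w :: "'a::real_inner"
  assumes "convex C" "p \<in> C" and p_min: "\<And>c. c \<in> C \<Longrightarrow> norm (w - p) \<le> norm (w - c)"
    and "c \<in> C"
  shows "norm (c - p) \<le> norm (c - w)"
proof -
  have "t * (2 * inner (w - p) (c - p)) \<le> t\<^sup>2 * (norm (c - p))\<^sup>2" if "0 < t" "t \<le> 1" for t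
  proof -
    have "p + t *\<^sub>R (c - p) = (1 - t) *\<^sub>R p + t *\<^sub>R c" by (simp add: algebra_simps)
    then have "p + t *\<^sub>R (c - p) \<in> C"
      using convexD[OF assms(1,2,4)] that by simp
    then have "(norm (w - p))\<^sup>2 \<le> (norm (w - (p + t *\<^sub>R (c - p))))\<^sup>2"
      using p_min by (simp add: power_mono)
    then have "0 \<le> t\<^sup>2 * (norm (c - p))\<^sup>2 - 2 * t * (inner w (c - p) - inner p (c - p))"
      unfolding norm_diff_translate_sq by simp
    then show ?thesis by (simp add: inner_diff_left algebra_simps)
  qed
  then have "2 * inner (w - p) (c - p) \<le> 0"
    by (rule nonpos_if_le_quadratic)
  moreover have "(norm (c - w))\<^sup>2 = (norm (c - p))\<^sup>2 - 2 * inner (w - p) (c - p) + (norm (w - p))\<^sup>2"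
    unfolding power2_norm_eq_inner by (simp add: inner_diff_left inner_diff_right inner_commute)
  ultimately have "(norm (c - p))\<^sup>2 \<le> (norm (c - w))\<^sup>2"
    using zero_le_power2[of "norm (w - p)"] by linarith
  then show ?thesis by (rule power2_le_imp_le) simp
qed

lemma convex_projection_nearer:
  fixes w :: "'a::{real_inner,complete_space}"
  assumes C: "bounded C" "closed C" "convex C" "C \<noteq> {}"
  shows "\<exists>p\<in>C. \<forall>c\<in>C. norm (c - p) \<le> norm (c - w)"
proof -
  obtain R where R: "\<And>c. c \<in> C \<Longrightarrow> norm c \<le> R"
    using C(1) unfolding bounded_iff by blast
  have lipschitz: "(norm (w - u))\<^sup>2 \<le> (norm (w - v))\<^sup>2 + (2 * norm w + 2 * R) * norm (u - v)"
    if "u \<in> C" "v \<in> C" for u v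
  proof -
    have "norm (u - v) * (2 * norm w + norm u + norm v) \<le> norm (u - v) * (2 * norm w + 2 * R)"
      using R[OF that(1)] R[OF that(2)] by (intro mult_left_mono) auto
    then show ?thesis using norm_diff_sq_le[of w u v] by (simp add: mult.commute)
  qed
  have midpoint: "(norm (w - (1/2) *\<^sub>R (u + v)))\<^sup>2
      \<le> (norm (w - u))\<^sup>2 / 2 + (norm (w - v))\<^sup>2 / 2 - (norm (u - v))\<^sup>2 / 4" for u v
    by (simp add: norm_diff_midpoint_sq)
  obtain p where "p \<in> C" and "\<And>c. c \<in> C \<Longrightarrow> (norm (w - p))\<^sup>2 \<le> (norm (w - c))\<^sup>2"
    using strongly_convex_attains_min[where \<phi>="\<lambda>c. (norm (w - c))\<^sup>2", OF C(2-4) _ midpoint lipschitz]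
    by auto
  then have "\<And>c. c \<in> C \<Longrightarrow> norm (w - p) \<le> norm (w - c)"
    by (auto intro: power2_le_imp_le)
  with \<open>p \<in> C\<close> show ?thesis
    using nearest_point_in_convex_nearer[OF C(3) \<open>p \<in> C\<close>] by blast
qed

section \<open>Asymptotic centres\<close>

definition asymptotic_radius_sq :: "(nat \<Rightarrow> 'a::real_normed_vector) \<Rightarrow> 'a \<Rightarrow> real" where
  "asymptotic_radius_sq x w = limsup_real (\<lambda>n. (norm (x n - w))\<^sup>2)"

definition asymptotic_center :: "'a set \<Rightarrow> (nat \<Rightarrow> 'a::real_normed_vector) \<Rightarrow> 'a \<Rightarrow> bool" where
  "asymptotic_center C x z \<longleftrightarrow>
     z \<in> C \<and> (\<forall>c\<in>C. asymptotic_radius_sq x z \<le> asymptotic_radius_sq x c)"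

lemma Bseq_norm_diff_sq:
  fixes x :: "nat \<Rightarrow> 'a::real_normed_vector"
  assumes "Bseq x"
  shows "Bseq (\<lambda>n. (norm (x n - w))\<^sup>2)"
proof -
  obtain K where K: "\<And>n. norm (x n) \<le> K" using assms unfolding Bseq_def by auto
  have "norm ((norm (x n - w))\<^sup>2) \<le> (K + norm w)\<^sup>2" for n
    using norm_triangle_ineq4[of "x n" w] K[of n] by (simp add: power_mono)
  then show ?thesis by (rule BseqI')
qed

lemma Bseq_in_bounded:
  fixes x :: "nat \<Rightarrow> 'a::real_normed_vector"
  assumes "bounded C" "\<And>n. x n \<in> C"
  shows "Bseq x"
proof -
  obtain R where "\<forall>c\<in>C. norm c \<le> R" using assms(1) unfolding bounded_iff by blast
  with assms(2) show ?thesis by (intro BseqI'[where K=R]) auto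
qed

lemma asymptotic_radius_sq_nonneg:
  "Bseq x \<Longrightarrow> 0 \<le> asymptotic_radius_sq x w"
  unfolding asymptotic_radius_sq_def by (auto intro: limsup_real_ge Bseq_norm_diff_sq)

lemma asymptotic_radius_sq_tendsto:
  "(\<lambda>n. (norm (x n - w))\<^sup>2) \<longlonglongrightarrow> L \<Longrightarrow> asymptotic_radius_sq x w = L"
  unfolding asymptotic_radius_sq_def by (rule limsup_real_tendsto)

lemma asymptotic_radius_sq_midpoint:
  fixes x :: "nat \<Rightarrow> 'a::real_inner"
  assumes "Bseq x"
  shows "asymptotic_radius_sq x ((1/2) *\<^sub>R (u + v))
    \<le> asymptotic_radius_sq x u / 2 + asymptotic_radius_sq x v / 2 - (norm (u - v))\<^sup>2 / 4"
proof -
  note bdd = Bseq_norm_diff_sq[OF assms]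
  have "limsup_real (\<lambda>n. (norm (x n - (1/2) *\<^sub>R (u + v)))\<^sup>2)
      \<le> 1/2 * limsup_real (\<lambda>n. (norm (x n - u))\<^sup>2) + 1/2 * limsup_real (\<lambda>n. (norm (x n - v))\<^sup>2)
        + - (norm (u - v))\<^sup>2 / 4"
    by (rule limsup_real_le_combination[OF bdd bdd bdd]) (simp_all add: norm_diff_midpoint_sq)
  then show ?thesis unfolding asymptotic_radius_sq_def by simp
qed

lemma asymptotic_radius_sq_le_plus:
  fixes x :: "nat \<Rightarrow> 'a::real_normed_vector"
  assumes "Bseq x" "\<And>n. (norm (x n - u))\<^sup>2 \<le> (norm (x n - v))\<^sup>2 + h n" "h \<longlonglongrightarrow> c"
  shows "asymptotic_radius_sq x u \<le> asymptotic_radius_sq x v + c"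
proof -
  note bdd = Bseq_norm_diff_sq[OF assms(1)]
  have "Bseq h" using assms(3) by (auto intro: convergent_imp_Bseq convergentI)
  have "limsup_real (\<lambda>n. (norm (x n - u))\<^sup>2)
      \<le> 1 * limsup_real (\<lambda>n. (norm (x n - v))\<^sup>2) + 1 * limsup_real h + 0"
    by (rule limsup_real_le_combination[OF bdd bdd \<open>Bseq h\<close>]) (simp_all add: assms(2))
  then show ?thesis
    unfolding asymptotic_radius_sq_def limsup_real_tendsto[OF assms(3)] by simp
qed

lemma asymptotic_center_exists:
  fixes x :: "nat \<Rightarrow> 'a::{real_inner,complete_space}"
  assumes C: "bounded C" "closed C" "convex C" "C \<noteq> {}" and x: "\<And>n. x n \<in> C"
  shows "\<exists>z. asymptotic_center C x z"
proof -
  obtain R where R: "\<And>c. c \<in> C \<Longrightarrow> norm c \<le> R"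
    using C(1) unfolding bounded_iff by blast
  have "Bseq x" using C(1) x by (rule Bseq_in_bounded)
  have "asymptotic_radius_sq x u \<le> asymptotic_radius_sq x v + 4 * R * norm (u - v)"
    if "u \<in> C" "v \<in> C" for u v
  proof (rule asymptotic_radius_sq_le_plus[OF \<open>Bseq x\<close> _ tendsto_const])
    fix n
    have "norm (u - v) * (2 * norm (x n) + norm u + norm v) \<le> norm (u - v) * (4 * R)"
      using R[OF x[of n]] R[OF that(1)] R[OF that(2)] by (intro mult_left_mono) auto
    then show "(norm (x n - u))\<^sup>2 \<le> (norm (x n - v))\<^sup>2 + 4 * R * norm (u - v)"
      using norm_diff_sq_le[of "x n" u v] by (simp add: mult.commute)
  qed
  then show ?thesis
    using strongly_convex_attains_min[OF C(2-4) asymptotic_radius_sq_nonneg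
        asymptotic_radius_sq_midpoint, OF \<open>Bseq x\<close> \<open>Bseq x\<close>]
    unfolding asymptotic_center_def by blast
qed

lemma asymptotic_center_unique:
  fixes x :: "nat \<Rightarrow> 'a::real_inner"
  assumes "convex C" "Bseq x" "asymptotic_center C x z1" "asymptotic_center C x z2"
  shows "z1 = z2"
proof (rule strongly_convex_min_unique[OF assms(1)])
  show "z1 \<in> C" "z2 \<in> C"
    "\<And>c. c \<in> C \<Longrightarrow> asymptotic_radius_sq x z1 \<le> asymptotic_radius_sq x c"
    "\<And>c. c \<in> C \<Longrightarrow> asymptotic_radius_sq x z2 \<le> asymptotic_radius_sq x c"
    using assms(3,4) unfolding asymptotic_center_def by auto
qed (rule asymptotic_radius_sq_midpoint[OF assms(2)])

(* The nearest point of C to w is nearer than w to every point of C. *)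
lemma asymptotic_center_global:
  fixes x :: "nat \<Rightarrow> 'a::{real_inner,complete_space}"
  assumes "bounded C" "closed C" "convex C" "\<And>n. x n \<in> C" "asymptotic_center C x z"
  shows "asymptotic_radius_sq x z \<le> asymptotic_radius_sq x w"
proof -
  obtain p where "p \<in> C" and p: "\<And>c. c \<in> C \<Longrightarrow> norm (c - p) \<le> norm (c - w)"
    using convex_projection_nearer[OF assms(1-3)] assms(5) unfolding asymptotic_center_def by blast
  have "asymptotic_radius_sq x p \<le> asymptotic_radius_sq x w + 0"
    using p[OF assms(4)] Bseq_in_bounded[OF assms(1,4)]
    by (intro asymptotic_radius_sq_le_plus[where h="\<lambda>n. 0"]) (auto intro: power_mono)
  with \<open>p \<in> C\<close> assms(5) show ?thesis unfolding asymptotic_center_def by force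
qed

(* Since \<parallel>x n - U z\<parallel> \<le> \<parallel>x n - U (x n)\<parallel> + \<parallel>x n - z\<parallel>, U z is again an asymptotic centre. *)
lemma asymptotic_center_fixed_point:
  fixes x :: "nat \<Rightarrow> 'a::real_inner"
  assumes C: "bounded C" "convex C" and U: "U ` C \<subseteq> C" "1-lipschitz_on C U"
    and x: "\<And>n. x n \<in> C" and residual: "(\<lambda>n. norm (x n - U (x n))) \<longlonglongrightarrow> 0"
    and z: "asymptotic_center C x z"
  shows "U z = z"
proof -
  obtain R where R: "\<And>c. c \<in> C \<Longrightarrow> norm c \<le> R"
    using C(1) unfolding bounded_iff by blast
  have "z \<in> C" "U z \<in> C" using z U(1) unfolding asymptotic_center_def by auto
  define e where "e n = norm (x n - U (x n))" for n
  have "(norm (x n - U z))\<^sup>2 \<le> (norm (x n - z))\<^sup>2 + e n * (e n + 4 * R)" for n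
  proof -
    have "norm (x n - U z) \<le> e n + norm (U (x n) - U z)"
      unfolding e_def using norm_triangle_ineq[of "x n - U (x n)" "U (x n) - U z"] by simp
    also have "\<dots> \<le> e n + norm (x n - z)"
      using lipschitz_on_normD[OF U(2) x[of n] \<open>z \<in> C\<close>] by simp
    finally have "(norm (x n - U z))\<^sup>2 \<le> (e n + norm (x n - z))\<^sup>2"
      by (rule power_mono) simp
    moreover have "norm (x n - z) \<le> 2 * R"
      using norm_triangle_ineq4[of "x n" z] R[OF x[of n]] R[OF \<open>z \<in> C\<close>] by linarith
    then have "e n * (2 * norm (x n - z)) \<le> e n * (4 * R)"
      unfolding e_def by (intro mult_left_mono) auto
    moreover have "(e n + norm (x n - z))\<^sup>2 = (norm (x n - z))\<^sup>2 + e n * e n + e n * (2 * norm (x n - z))"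
      by (simp add: power2_sum power2_eq_square algebra_simps)
    moreover have "e n * (e n + 4 * R) = e n * e n + e n * (4 * R)"
      by (simp add: algebra_simps)
    ultimately show ?thesis by linarith
  qed
  moreover have "(\<lambda>n. e n * (e n + 4 * R)) \<longlonglongrightarrow> 0 * (0 + 4 * R)"
    using residual unfolding e_def by (intro tendsto_intros)
  ultimately have "asymptotic_radius_sq x (U z) \<le> asymptotic_radius_sq x z"
    using asymptotic_radius_sq_le_plus[OF Bseq_in_bounded[OF C(1) x]] by fastforce
  with \<open>U z \<in> C\<close> z have "asymptotic_center C x (U z)"
    unfolding asymptotic_center_def by force
  then show ?thesis
    using asymptotic_center_unique[OF C(2) Bseq_in_bounded[OF C(1) x] _ z] by blast
qed

section \<open>Fixed points and weak convergence for nonexpansive maps\<close>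

lemma nonexpansive_anchored_fixed_point:
  fixes U :: "'a::{real_normed_vector,complete_space} \<Rightarrow> 'a"
  assumes C: "closed C" "convex C" and U: "U ` C \<subseteq> C" "1-lipschitz_on C U"
    and c0: "c0 \<in> C" and a: "0 < a" "a \<le> 1"
  shows "\<exists>y\<in>C. (1 - a) *\<^sub>R U y + a *\<^sub>R c0 = y"
proof -
  have "\<exists>!y\<in>C. (1 - a) *\<^sub>R U y + a *\<^sub>R c0 = y"
  proof (rule Banach_fix[where c="1 - a"])
    show "complete C" using C(1) by (simp add: complete_eq_closed)
    show "C \<noteq> {}" "0 \<le> 1 - a" "1 - a < 1" using c0 a by auto
    show "(\<lambda>y. (1 - a) *\<^sub>R U y + a *\<^sub>R c0) ` C \<subseteq> C"
    proof (rule image_subsetI)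
      fix y assume "y \<in> C"
      with U(1) have "U y \<in> C" by blast
      with a show "(1 - a) *\<^sub>R U y + a *\<^sub>R c0 \<in> C" by (intro convexD[OF C(2) _ c0]) auto
    qed
  next
    fix u v assume "u \<in> C" "v \<in> C"
    then have "(1 - a) * norm (U u - U v) \<le> (1 - a) * norm (u - v)"
      using lipschitz_on_normD[OF U(2)] a by (intro mult_left_mono) auto
    then show "dist ((1 - a) *\<^sub>R U u + a *\<^sub>R c0) ((1 - a) *\<^sub>R U v + a *\<^sub>R c0) \<le> (1 - a) * dist u v"
      using a by (simp add: dist_norm flip: scaleR_diff_right)
  qed
  then show ?thesis by blast
qed

theorem nonexpansive_fixed_point_exists:
  fixes U :: "'a::{real_inner,complete_space} \<Rightarrow> 'a"
  assumes C: "bounded C" "closed C" "convex C" "C \<noteq> {}"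
    and U: "U ` C \<subseteq> C" "1-lipschitz_on C U"
  shows "\<exists>z\<in>C. U z = z"
proof -
  obtain c0 where "c0 \<in> C" using C(4) by blast
  obtain R where R: "\<And>c. c \<in> C \<Longrightarrow> norm c \<le> R"
    using C(1) unfolding bounded_iff by blast
  define a :: "nat \<Rightarrow> real" where "a n = inverse (Suc n)" for n
  have a: "0 < a n" "a n \<le> 1" for n
    unfolding a_def by (simp_all add: inverse_le_1_iff)
  have "\<forall>n. \<exists>y. y \<in> C \<and> (1 - a n) *\<^sub>R U y + a n *\<^sub>R c0 = y"
    using nonexpansive_anchored_fixed_point[OF C(2,3) U \<open>c0 \<in> C\<close> a] by blast
  then obtain y where y: "\<And>n. y n \<in> C" and y_eq: "\<And>n. (1 - a n) *\<^sub>R U (y n) + a n *\<^sub>R c0 = y n"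
    by (auto dest!: choice)
  have bound: "norm (y n - U (y n)) \<le> a n * (2 * R)" for n
  proof -
    have "y n - U (y n) = ((1 - a n) *\<^sub>R U (y n) + a n *\<^sub>R c0) - U (y n)"
      by (simp only: y_eq)
    also have "\<dots> = a n *\<^sub>R (c0 - U (y n))"
      by (simp only: scaleR_diff_right scaleR_diff_left scaleR_one) (simp only: algebra_simps)
    finally have "norm (y n - U (y n)) = a n * norm (c0 - U (y n))"
      using a(1)[of n] by simp
    moreover have "U (y n) \<in> C" using U(1) y[of n] by blast
    then have "norm (c0 - U (y n)) \<le> 2 * R"
      using norm_triangle_ineq4[of c0 "U (y n)"] R[OF \<open>c0 \<in> C\<close>] R[of "U (y n)"] by linarith
    ultimately show ?thesis using a(1)[of n] by (simp add: mult_left_mono)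
  qed
  have "(\<lambda>n. a n * (2 * R)) \<longlonglongrightarrow> 0"
    using tendsto_mult[OF LIMSEQ_inverse_real_of_nat tendsto_const, of "2 * R"]
    unfolding a_def by simp
  then have "(\<lambda>n. norm (y n - U (y n))) \<longlonglongrightarrow> 0"
    by (rule Lim_null_comparison[rotated]) (simp add: bound)
  moreover obtain z where "asymptotic_center C y z"
    using asymptotic_center_exists[OF C, of y] y by blast
  ultimately have "U z = z"
    using asymptotic_center_fixed_point[OF C(1,3) U, of y] y by blast
  with \<open>asymptotic_center C y z\<close> show ?thesis unfolding asymptotic_center_def by blast
qed

lemma tendsto_if_subsequence_limits_eq:
  fixes g :: "nat \<Rightarrow> 'a::heine_borel"
  assumes "bounded (range g)" and limits: "\<And>r l. strict_mono r \<Longrightarrow> (g \<circ> r) \<longlonglongrightarrow> l \<Longrightarrow> l = c"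
  shows "g \<longlonglongrightarrow> c"
proof (rule ccontr)
  assume "\<not> g \<longlonglongrightarrow> c"
  then obtain e where "0 < e" and far: "\<not> eventually (\<lambda>n. dist (g n) c < e) sequentially"
    unfolding tendsto_iff by blast
  obtain r :: "nat \<Rightarrow> nat" where r: "strict_mono r" "\<And>n. \<not> dist (g (r n)) c < e"
    using not_eventually_sequentiallyD[OF far] by blast
  have "bounded (range (g \<circ> r))" using assms(1) by (rule bounded_subset) auto
  then obtain l r' where r': "strict_mono r'" and l: "(g \<circ> (r \<circ> r')) \<longlonglongrightarrow> l"
    using bounded_imp_convergent_subsequence[of "g \<circ> r"] by (auto simp: o_assoc)
  have "l = c" using limits[OF strict_mono_o[OF r(1) r'] l] .
  with l \<open>0 < e\<close> have "eventually (\<lambda>n. dist (g (r (r' n))) c < e) sequentially"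
    unfolding tendsto_iff by auto
  with r(2) show False by auto
qed

lemma asymptotic_radius_sq_subseq:
  assumes "convergent (\<lambda>n. norm (x n - q))" "strict_mono r"
  shows "asymptotic_radius_sq (x \<circ> r) q = asymptotic_radius_sq x q"
proof -
  obtain d where "(\<lambda>n. norm (x n - q)) \<longlonglongrightarrow> d" using assms(1) unfolding convergent_def by blast
  then have d: "(\<lambda>n. (norm (x n - q))\<^sup>2) \<longlonglongrightarrow> d\<^sup>2" by (intro tendsto_intros)
  have "(\<lambda>n. (norm ((x \<circ> r) n - q))\<^sup>2) \<longlonglongrightarrow> d\<^sup>2"
    using LIMSEQ_subseq_LIMSEQ[OF d assms(2)] by (simp add: o_def)
  with d show ?thesis by (simp add: asymptotic_radius_sq_tendsto)
qed

(* The radius at a fixed point is a limit, hence the same for x and all its subsequences. *)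
lemma asymptotic_center_subseq:
  fixes x :: "nat \<Rightarrow> 'a::{real_inner,complete_space}"
  assumes C: "bounded C" "closed C" "convex C"
    and U: "U ` C \<subseteq> C" "1-lipschitz_on C U"
    and x: "\<And>n. x n \<in> C" and residual: "(\<lambda>n. norm (x n - U (x n))) \<longlonglongrightarrow> 0"
    and fejer: "\<And>q. q \<in> C \<Longrightarrow> U q = q \<Longrightarrow> convergent (\<lambda>n. norm (x n - q))"
    and z: "asymptotic_center C x z" and r: "strict_mono r"
  shows "asymptotic_center C (x \<circ> r) z"
proof -
  have xr: "(x \<circ> r) n \<in> C" for n using x by simp
  have "C \<noteq> {}" using x by blast
  have residual_r: "(\<lambda>n. norm ((x \<circ> r) n - U ((x \<circ> r) n))) \<longlonglongrightarrow> 0"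
    using LIMSEQ_subseq_LIMSEQ[OF residual r] by (simp add: o_def)
  obtain z' where z': "asymptotic_center C (x \<circ> r) z'"
    using asymptotic_center_exists[OF C \<open>C \<noteq> {}\<close>, of "x \<circ> r"] xr by blast
  have "z \<in> C" "z' \<in> C" using z z' unfolding asymptotic_center_def by auto
  have "U z = z" using asymptotic_center_fixed_point[OF C(1,3) U x residual z] .
  have "U z' = z'" using asymptotic_center_fixed_point[OF C(1,3) U xr residual_r z'] .
  have "asymptotic_radius_sq (x \<circ> r) z = asymptotic_radius_sq x z"
    using asymptotic_radius_sq_subseq[OF fejer[OF \<open>z \<in> C\<close> \<open>U z = z\<close>] r] .
  also have "\<dots> \<le> asymptotic_radius_sq x z'"
    using z \<open>z' \<in> C\<close> unfolding asymptotic_center_def by blast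
  also have "\<dots> = asymptotic_radius_sq (x \<circ> r) z'"
    using asymptotic_radius_sq_subseq[OF fejer[OF \<open>z' \<in> C\<close> \<open>U z' = z'\<close>] r] by simp
  finally show ?thesis
    using z' \<open>z \<in> C\<close> unfolding asymptotic_center_def by force
qed

(* z minimises the asymptotic radius globally, and t \<mapsto> radius (z + t y) is a quadratic in t. *)
lemma inner_limit_asymptotic_center:
  fixes x :: "nat \<Rightarrow> 'a::{real_inner,complete_space}"
  assumes C: "bounded C" "closed C" "convex C" and x: "\<And>n. x n \<in> C"
    and z: "asymptotic_center C x z" and "convergent (\<lambda>n. norm (x n - z))"
    and a: "(\<lambda>n. inner (x n) y) \<longlonglongrightarrow> a"
  shows "a = inner z y"
proof -
  obtain d where "(\<lambda>n. norm (x n - z)) \<longlonglongrightarrow> d" using assms(6) unfolding convergent_def by blast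
  then have d: "(\<lambda>n. (norm (x n - z))\<^sup>2) \<longlonglongrightarrow> d\<^sup>2" by (intro tendsto_intros)
  have quadratic: "t * (2 * (a - inner z y)) \<le> t\<^sup>2 * (norm y)\<^sup>2" for t
  proof -
    have "(\<lambda>n. (norm (x n - (z + t *\<^sub>R y)))\<^sup>2)
        \<longlonglongrightarrow> d\<^sup>2 - 2 * t * (a - inner z y) + t\<^sup>2 * (norm y)\<^sup>2"
      unfolding norm_diff_translate_sq by (intro tendsto_intros d a)
    then have "asymptotic_radius_sq x (z + t *\<^sub>R y) = d\<^sup>2 - 2 * t * (a - inner z y) + t\<^sup>2 * (norm y)\<^sup>2"
      by (rule asymptotic_radius_sq_tendsto)
    moreover have "asymptotic_radius_sq x z = d\<^sup>2" using d by (rule asymptotic_radius_sq_tendsto)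
    ultimately show ?thesis
      using asymptotic_center_global[OF C x z, of "z + t *\<^sub>R y"] by (simp add: algebra_simps)
  qed
  have "2 * (a - inner z y) \<le> 0"
    using quadratic by (rule nonpos_if_le_quadratic)
  moreover have "- (2 * (a - inner z y)) \<le> 0"
  proof (rule nonpos_if_le_quadratic)
    show "t * - (2 * (a - inner z y)) \<le> t\<^sup>2 * (norm y)\<^sup>2" for t
      using quadratic[of "- t"] by (simp add: algebra_simps)
  qed
  ultimately show ?thesis by simp
qed

theorem fejer_weakly_converges:
  fixes x :: "nat \<Rightarrow> 'a::{real_inner,complete_space}"
  assumes C: "bounded C" "closed C" "convex C"
    and U: "U ` C \<subseteq> C" "1-lipschitz_on C U"
    and x: "\<And>n. x n \<in> C" and residual: "(\<lambda>n. norm (x n - U (x n))) \<longlonglongrightarrow> 0"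
    and fejer: "\<And>q. q \<in> C \<Longrightarrow> U q = q \<Longrightarrow> convergent (\<lambda>n. norm (x n - q))"
  shows "\<exists>z\<in>C. U z = z \<and> weakly_converges_to x z"
proof -
  have "C \<noteq> {}" using x by blast
  obtain z where z: "asymptotic_center C x z"
    using asymptotic_center_exists[OF C \<open>C \<noteq> {}\<close>, of x] x by blast
  then have "z \<in> C" unfolding asymptotic_center_def by blast
  have "U z = z" using asymptotic_center_fixed_point[OF C(1,3) U x residual z] .
  obtain R where R: "\<And>c. c \<in> C \<Longrightarrow> norm c \<le> R"
    using C(1) unfolding bounded_iff by blast
  have "(\<lambda>n. inner (x n) y) \<longlonglongrightarrow> inner z y" for y
  proof (rule tendsto_if_subsequence_limits_eq)
    have "norm (inner (x n) y) \<le> R * norm y" for n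
      using Cauchy_Schwarz_ineq2[of "x n" y] R[OF x[of n]] by (simp add: mult_right_mono order_trans)
    then show "bounded (range (\<lambda>n. inner (x n) y))"
      unfolding bounded_iff by blast
  next
    fix r l assume r: "strict_mono r" and l: "((\<lambda>n. inner (x n) y) \<circ> r) \<longlonglongrightarrow> l"
    show "l = inner z y"
    proof (rule inner_limit_asymptotic_center[OF C])
      show "(x \<circ> r) n \<in> C" for n using x by simp
      show "asymptotic_center C (x \<circ> r) z"
        by (rule asymptotic_center_subseq[OF C U x residual fejer z r])
      show "convergent (\<lambda>n. norm ((x \<circ> r) n - z))"
        using convergent_subseq_convergent[OF fejer[OF \<open>z \<in> C\<close> \<open>U z = z\<close>] r] by (simp add: o_def)
      show "(\<lambda>n. inner ((x \<circ> r) n) y) \<longlonglongrightarrow> l" using l by (simp add: o_def)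
    qed
  qed
  with \<open>z \<in> C\<close> \<open>U z = z\<close> show ?thesis unfolding weakly_converges_to_def by blast
qed

section \<open>Krasnoselskij-Mann iteration\<close>

locale km_iteration =
  fixes C :: "'a::real_inner set" and U :: "'a \<Rightarrow> 'a" and s :: "nat \<Rightarrow> real" and x :: "nat \<Rightarrow> 'a"
  assumes convex: "convex C" and maps: "U ` C \<subseteq> C" and nonexpansive: "1-lipschitz_on C U"
    and start: "x 0 \<in> C"
    and step: "\<And>n. x (Suc n) = (1 - s n) *\<^sub>R x n + s n *\<^sub>R U (x n)"
    and step_size: "\<And>n. 0 \<le> s n" "\<And>n. s n \<le> 1"
begin

lemma iterate_in: "x n \<in> C"
proof (induction n)
  case (Suc n)
  with maps have "U (x n) \<in> C" by blast
  with Suc step_size show ?case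
    unfolding step by (intro convexD[OF convex]) auto
qed (rule start)

lemma fejer_step:
  assumes "q \<in> C" "U q = q"
  shows "(norm (x (Suc n) - q))\<^sup>2
    \<le> (norm (x n - q))\<^sup>2 - s n * (1 - s n) * (norm (x n - U (x n)))\<^sup>2"
proof -
  have "x (Suc n) - q = (1 - s n) *\<^sub>R (x n - q) + s n *\<^sub>R (U (x n) - q)"
    unfolding step by (simp add: algebra_simps)
  then have "(norm (x (Suc n) - q))\<^sup>2 = (1 - s n) * (norm (x n - q))\<^sup>2
      + s n * (norm (U (x n) - U q))\<^sup>2 - s n * (1 - s n) * (norm (x n - U (x n)))\<^sup>2"
    using assms(2) by (simp add: norm_convex_combination_sq)
  moreover have "(norm (U (x n) - U q))\<^sup>2 \<le> (norm (x n - q))\<^sup>2"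
    using lipschitz_on_normD[OF nonexpansive iterate_in assms(1)] by (simp add: power_mono)
  then have "s n * (norm (U (x n) - U q))\<^sup>2 \<le> s n * (norm (x n - q))\<^sup>2"
    using step_size(1) by (rule mult_left_mono)
  ultimately show ?thesis by (simp add: algebra_simps)
qed

lemma dist_fixed_point_convergent:
  assumes "q \<in> C" "U q = q"
  shows "convergent (\<lambda>n. norm (x n - q))"
proof -
  have "(norm (x (Suc n) - q))\<^sup>2 \<le> (norm (x n - q))\<^sup>2" for n
  proof -
    have "0 \<le> s n * (1 - s n) * (norm (x n - U (x n)))\<^sup>2"
      using step_size[of n] by simp
    then show ?thesis using fejer_step[OF assms, of n] by linarith
  qed
  then have "decseq (\<lambda>n. norm (x n - q))"
    by (intro decseq_SucI) (rule power2_le_imp_le, simp_all)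
  then obtain L where "(\<lambda>n. norm (x n - q)) \<longlonglongrightarrow> L"
    using decseq_convergent[of "\<lambda>n. norm (x n - q)" 0] by auto
  then show ?thesis by (rule convergentI)
qed

lemma residual_decseq: "decseq (\<lambda>n. norm (x n - U (x n)))"
proof (rule decseq_SucI)
  fix n
  have "x (Suc n) - U (x (Suc n)) = (1 - s n) *\<^sub>R (x n - U (x n)) + (U (x n) - U (x (Suc n)))"
    using step[of n] by (simp add: algebra_simps)
  then have "norm (x (Suc n) - U (x (Suc n)))
      \<le> norm ((1 - s n) *\<^sub>R (x n - U (x n))) + norm (U (x n) - U (x (Suc n)))"
    by (simp only: norm_triangle_ineq)
  also have "norm ((1 - s n) *\<^sub>R (x n - U (x n))) = (1 - s n) * norm (x n - U (x n))"
    using step_size(2)[of n] by simp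
  also have "norm (U (x n) - U (x (Suc n))) \<le> norm (x n - x (Suc n))"
    using lipschitz_on_normD[OF nonexpansive iterate_in iterate_in] by simp
  also have "norm (x n - x (Suc n)) = s n * norm (x n - U (x n))"
  proof -
    have "x n - x (Suc n) = s n *\<^sub>R (x n - U (x n))"
      using step[of n] by (simp add: algebra_simps)
    then show ?thesis using step_size(1)[of n] by simp
  qed
  finally show "norm (x (Suc n) - U (x (Suc n))) \<le> norm (x n - U (x n))"
    by (simp add: algebra_simps)
qed

lemma residual_tendsto_zero:
  assumes "\<not> summable (\<lambda>n. s n * (1 - s n))" "p \<in> C" "U p = p"
  shows "(\<lambda>n. norm (x n - U (x n))) \<longlonglongrightarrow> 0"
proof -
  define e where "e = (\<lambda>n. norm (x n - U (x n)))"
  obtain L where L: "e \<longlonglongrightarrow> L" "\<And>n. L \<le> e n"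
    using decseq_convergent[OF residual_decseq, of 0] unfolding e_def by auto
  have "0 \<le> L" using L(1) by (rule LIMSEQ_le_const) (auto simp: e_def)
  have telescope: "(\<Sum>i<N. s i * (1 - s i) * (e i)\<^sup>2) \<le> (norm (x 0 - p))\<^sup>2 - (norm (x N - p))\<^sup>2" for N
  proof (induction N)
    case (Suc N)
    then show ?case
      using fejer_step[OF assms(2,3), of N] unfolding e_def sum.lessThan_Suc by linarith
  qed simp
  have "L = 0"
  proof (rule ccontr)
    assume "L \<noteq> 0"
    with \<open>0 \<le> L\<close> have "0 < L\<^sup>2" by simp
    have "(\<Sum>i<N. s i * (1 - s i)) * L\<^sup>2 \<le> (norm (x 0 - p))\<^sup>2" for N
    proof -
      have "(\<Sum>i<N. s i * (1 - s i)) * L\<^sup>2 \<le> (\<Sum>i<N. s i * (1 - s i) * (e i)\<^sup>2)"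
        unfolding sum_distrib_right using step_size \<open>0 \<le> L\<close> L(2)
        by (intro sum_mono mult_left_mono power_mono) auto
      with telescope[of N] zero_le_power2[of "norm (x N - p)"] show ?thesis by linarith
    qed
    then have "summable (\<lambda>n. s n * (1 - s n))"
      using step_size \<open>0 < L\<^sup>2\<close>
      by (intro summableI_nonneg_bounded[where x="(norm (x 0 - p))\<^sup>2 / L\<^sup>2"])
        (auto simp: pos_le_divide_eq)
    with assms(1) show False by contradiction
  qed
  with L(1) show ?thesis unfolding e_def by simp
qed

end

theorem km_weakly_converges:
  fixes x :: "nat \<Rightarrow> 'a::{real_inner,complete_space}"
  assumes "km_iteration C U s x" "bounded C" "closed C" "\<not> summable (\<lambda>n. s n * (1 - s n))"
  shows "\<exists>p\<in>C. U p = p \<and> weakly_converges_to x p"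
proof -
  interpret km_iteration C U s x by fact
  obtain p where "p \<in> C" "U p = p"
    using nonexpansive_fixed_point_exists[OF assms(2,3) convex _ maps nonexpansive] start by blast
  show ?thesis
    by (rule fejer_weakly_converges[OF assms(2,3) convex maps nonexpansive iterate_in
          residual_tendsto_zero[OF assms(4) \<open>p \<in> C\<close> \<open>U p = p\<close>] dist_fixed_point_convergent])
qed

section \<open>Enriched strictly pseudocontractive maps\<close>

lemma enriched_strictly_pseudocontractive_averaged_nonexpansive:
  assumes "enriched_strictly_pseudocontractive b k C T"
  shows "1-lipschitz_on C (\<lambda>c. c - ((1 - k) / (b + 1)) *\<^sub>R (c - T c))"
proof (rule lipschitz_onI)
  fix x y assume "x \<in> C" "y \<in> C"
  define \<mu> where "\<mu> = (1 - k) / (b + 1)"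
  define u where "u = x - y"
  define w where "w = x - y - (T x - T y)"
  have "0 \<le> b" "k < 1" using assms unfolding enriched_strictly_pseudocontractive_def by auto
  have "(norm ((b + 1) *\<^sub>R u - w))\<^sup>2 \<le> (b + 1)\<^sup>2 * (norm u)\<^sup>2 + k * (norm w)\<^sup>2"
    using assms \<open>x \<in> C\<close> \<open>y \<in> C\<close> unfolding enriched_strictly_pseudocontractive_def u_def w_def
    by (simp add: algebra_simps)
  then have "(1 - k) * (norm w)\<^sup>2 \<le> (b + 1) * (2 * inner u w)"
    unfolding power2_norm_eq_inner by (simp add: inner_diff_left inner_diff_right inner_commute
        power2_eq_square algebra_simps)
  then have "\<mu> * (norm w)\<^sup>2 \<le> 2 * inner u w"
    using \<open>0 \<le> b\<close> unfolding \<mu>_def by (simp add: field_simps)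
  moreover have "0 \<le> \<mu>" using \<open>0 \<le> b\<close> \<open>k < 1\<close> unfolding \<mu>_def by simp
  ultimately have "(norm (u - \<mu> *\<^sub>R w))\<^sup>2 \<le> (norm u)\<^sup>2"
    unfolding power2_norm_eq_inner
    by (simp add: inner_diff_left inner_diff_right inner_commute power2_eq_square algebra_simps
        mult_left_mono)
  then have "norm (u - \<mu> *\<^sub>R w) \<le> norm u" by (rule power2_le_imp_le) simp
  moreover have "(x - \<mu> *\<^sub>R (x - T x)) - (y - \<mu> *\<^sub>R (y - T y)) = u - \<mu> *\<^sub>R w"
    unfolding u_def w_def by (simp add: algebra_simps)
  ultimately show "dist (x - \<mu> *\<^sub>R (x - T x)) (y - \<mu> *\<^sub>R (y - T y)) \<le> 1 * dist x y"
    by (simp only: dist_norm u_def mult_1)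
qed simp

lemma averaged_map_maps_into:
  assumes "convex C" "T ` C \<subseteq> C" "0 \<le> \<mu>" "\<mu> \<le> 1"
  shows "(\<lambda>c. c - \<mu> *\<^sub>R (c - T c)) ` C \<subseteq> C"
proof (rule image_subsetI)
  fix c assume "c \<in> C"
  then have "(1 - \<mu>) *\<^sub>R c + \<mu> *\<^sub>R T c \<in> C"
    using assms by (intro convexD[OF assms(1)]) auto
  then show "c - \<mu> *\<^sub>R (c - T c) \<in> C" by (simp add: algebra_simps)
qed

lemma Fix_averaged_map:
  fixes T :: "'a::real_vector \<Rightarrow> 'a"
  assumes "\<mu> \<noteq> 0"
  shows "Fix C T = {c \<in> C. c - \<mu> *\<^sub>R (c - T c) = c}"
  using assms unfolding Fix_def by (auto simp: eq_commute[of "T _"])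

lemma not_summable_halved_steps:
  fixes \<alpha> :: "nat \<Rightarrow> real"
  assumes "0 \<le> k" "\<And>n. k < \<alpha> n \<and> \<alpha> n < 1" "\<not> summable (\<lambda>n. (\<alpha> n - k) * (1 - \<alpha> n))"
  shows "\<not> summable (\<lambda>n. \<alpha> n / 2 * (1 - \<alpha> n / 2))"
proof
  assume "summable (\<lambda>n. \<alpha> n / 2 * (1 - \<alpha> n / 2))"
  then have "summable (\<lambda>n. 4 * (\<alpha> n / 2 * (1 - \<alpha> n / 2)))" by (rule summable_mult)
  moreover have "norm ((\<alpha> n - k) * (1 - \<alpha> n)) \<le> 4 * (\<alpha> n / 2 * (1 - \<alpha> n / 2))" for n
  proof -
    have "norm ((\<alpha> n - k) * (1 - \<alpha> n)) = (\<alpha> n - k) * (1 - \<alpha> n)"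
      using assms(2)[of n] by simp
    moreover have "(\<alpha> n - k) * (1 - \<alpha> n) \<le> \<alpha> n * (1 - \<alpha> n)"
      using assms(1) assms(2)[of n] by (intro mult_right_mono) auto
    moreover have "4 * (\<alpha> n / 2 * (1 - \<alpha> n / 2)) = \<alpha> n * (1 - \<alpha> n) + \<alpha> n"
      by (simp add: algebra_simps)
    ultimately show ?thesis using assms(1) assms(2)[of n] by linarith
  qed
  ultimately have "summable (\<lambda>n. (\<alpha> n - k) * (1 - \<alpha> n))"
    by (rule summable_comparison_test')
  with assms(3) show False by contradiction
qed

theorem theorem5:
  fixes C :: "'a::{real_inner, complete_space} set"
    and T :: "'a \<Rightarrow> 'a" and b k :: real
  assumes "bounded C" and "closed C" and "convex C" and "C \<noteq> {}"
    and "T ` C \<subseteq> C"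
    and "0 \<le> k" and "k < 1"
    and "enriched_strictly_pseudocontractive b k C T"
  shows "Fix C T \<noteq> {} \<and>
    (\<exists>lam::real. 0 < lam \<and> lam < 1 \<and>
      (\<forall>(\<alpha>::nat \<Rightarrow> real) (x::nat \<Rightarrow> 'a).
         (\<forall>n. k < \<alpha> n \<and> \<alpha> n < 1)
         \<longrightarrow> \<not> summable (\<lambda>n. (\<alpha> n - k) * (1 - \<alpha> n))
         \<longrightarrow> x 0 \<in> C
         \<longrightarrow> (\<forall>n. x (Suc n) = (1 - lam * \<alpha> n) *\<^sub>R x n + (lam * \<alpha> n) *\<^sub>R T (x n))
         \<longrightarrow> (\<exists>p \<in> Fix C T. weakly_converges_to x p)))"
proof -
  define \<mu> where "\<mu> = (1 - k) / (b + 1)"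
  define U where "U = (\<lambda>c. c - \<mu> *\<^sub>R (c - T c))"
  have "0 \<le> b" using assms(8) unfolding enriched_strictly_pseudocontractive_def by simp
  then have "0 < \<mu>" "\<mu> \<le> 1" using assms(6,7) unfolding \<mu>_def by (simp_all add: field_simps)
  have nonexpansive: "1-lipschitz_on C U"
    using enriched_strictly_pseudocontractive_averaged_nonexpansive[OF assms(8)]
    unfolding U_def \<mu>_def .
  have maps: "U ` C \<subseteq> C"
    unfolding U_def using averaged_map_maps_into[OF assms(3,5)] \<open>0 < \<mu>\<close> \<open>\<mu> \<le> 1\<close> by simp
  have Fix_eq: "Fix C T = {c \<in> C. U c = c}"
    unfolding U_def using \<open>0 < \<mu>\<close> by (intro Fix_averaged_map) simp
  show ?thesis
  proof (intro conjI exI[of _ "\<mu> / 2"] allI impI)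
    show "Fix C T \<noteq> {}"
      using nonexpansive_fixed_point_exists[OF assms(1-4) maps nonexpansive] Fix_eq by auto
    show "0 < \<mu> / 2" "\<mu> / 2 < 1" using \<open>0 < \<mu>\<close> \<open>\<mu> \<le> 1\<close> by simp_all
    fix \<alpha> :: "nat \<Rightarrow> real" and x :: "nat \<Rightarrow> 'a"
    assume \<alpha>: "\<forall>n. k < \<alpha> n \<and> \<alpha> n < 1" and diverges: "\<not> summable (\<lambda>n. (\<alpha> n - k) * (1 - \<alpha> n))"
      and "x 0 \<in> C"
      and step: "\<forall>n. x (Suc n) = (1 - \<mu> / 2 * \<alpha> n) *\<^sub>R x n + (\<mu> / 2 * \<alpha> n) *\<^sub>R T (x n)"
    have "km_iteration C U (\<lambda>n. \<alpha> n / 2) x"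
    proof
      show "x (Suc n) = (1 - \<alpha> n / 2) *\<^sub>R x n + (\<alpha> n / 2) *\<^sub>R U (x n)" for n
        using step unfolding U_def by (simp add: algebra_simps)
      show "0 \<le> \<alpha> n / 2" "\<alpha> n / 2 \<le> 1" for n
        using spec[OF \<alpha>, of n] assms(6) by auto
    qed (use assms(3) maps nonexpansive \<open>x 0 \<in> C\<close> in auto)
    moreover have "\<not> summable (\<lambda>n. \<alpha> n / 2 * (1 - \<alpha> n / 2))"
      using not_summable_halved_steps[OF assms(6)] \<alpha> diverges by blast
    ultimately show "\<exists>p \<in> Fix C T. weakly_converges_to x p"
      using km_weakly_converges[OF _ assms(1,2)] Fix_eq by blast
  qed
qed

end
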